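(* Let $a\ge 0$ be a real number and let $T$ be a tree on $n$ vertices with degrees $k_1,\dots,k_n$, and set $\langle k^2\rangle=\frac{1}{n}\sum_{i=1}^n k_i^2$ and $E_0[C]=\frac{n}{6}\left(n-1-\langle k^2\rangle\right)$. If $n>3a+3$ and $E_0[C]\le a$, then $T$ is a star tree, i.e. $T$ has a vertex of degree $n-1$.
   Context: $E_0[C]$ equals the expected number of crossings when the vertices of $T$ are placed at positions $1,\dots,n$ by a uniformly random permutation, where two edges $\{s,t\}$, $\{u,v\}$ cross iff exactly one of the positions of $s,t$ lies strictly between the positions of $u$ and $v$ and the other lies strictly outside that interval. *)

theory Defs
  imports Complex_Main
begin

definition simple_graph :: "'a set \<Rightarrow> 'a set set \<Rightarrow> bool" where
  "simple_graph V E \<longleftrightarrow> finite V \<and>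
     (\<forall>e\<in>E. \<exists>u v. u \<in> V \<and> v \<in> V \<and> u \<noteq> v \<and> e = {u, v})"

definition is_walk :: "'a set \<Rightarrow> 'a set set \<Rightarrow> 'a list \<Rightarrow> bool" where
  "is_walk V E xs \<longleftrightarrow> xs \<noteq> [] \<and> set xs \<subseteq> V \<and>
     (\<forall>i. Suc i < length xs \<longrightarrow> {xs ! i, xs ! Suc i} \<in> E)"

definition graph_connected :: "'a set \<Rightarrow> 'a set set \<Rightarrow> bool" where
  "graph_connected V E \<longleftrightarrow>
     (\<forall>u\<in>V. \<forall>v\<in>V. \<exists>xs. is_walk V E xs \<and> hd xs = u \<and> last xs = v)"

definition is_cycle :: "'a set \<Rightarrow> 'a set set \<Rightarrow> 'a list \<Rightarrow> bool" where
  "is_cycle V E xs \<longleftrightarrow> length xs \<ge> 3 \<and> distinct xs \<and> is_walk V E xs \<and>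
     {last xs, hd xs} \<in> E"

definition acyclic_graph :: "'a set \<Rightarrow> 'a set set \<Rightarrow> bool" where
  "acyclic_graph V E \<longleftrightarrow> \<not> (\<exists>xs. is_cycle V E xs)"

definition is_tree :: "'a set \<Rightarrow> 'a set set \<Rightarrow> bool" where
  "is_tree V E \<longleftrightarrow> simple_graph V E \<and> V \<noteq> {} \<and> graph_connected V E \<and> acyclic_graph V E"

definition degree :: "'a set set \<Rightarrow> 'a \<Rightarrow> nat" where
  "degree E v = card {e \<in> E. v \<in> e}"

definition second_moment_degree :: "'a set \<Rightarrow> 'a set set \<Rightarrow> real" where
  "second_moment_degree V E = (\<Sum>v\<in>V. real (degree E v) ^ 2) / real (card V)"

definition E0C :: "'a set \<Rightarrow> 'a set set \<Rightarrow> real" where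
  "E0C V E = real (card V) / 6 * (real (card V) - 1 - second_moment_degree V E)"

end

theory Submission
  imports Defs
begin

text \<open>
  Counting incidences of ordered pairs of edges gives \<open>\<Sum>\<^sub>v k\<^sub>v\<^sup>2 = \<Sum>\<^sub>e\<^sub>,\<^sub>f |e \<inter> f|\<close>,
  hence \<open>\<Sum>\<^sub>v k\<^sub>v\<^sup>2 + D = m\<^sup>2 + m\<close>, where \<open>m\<close> is the number of edges and \<open>D\<close> the number of
  ordered pairs of disjoint edges. A tree that is not a star contains a path \<open>a - b - c - d\<close>;
  since there are no cycles, every edge other than \<open>bc\<close> is disjoint from \<open>ab\<close> or from \<open>cd\<close>,
  so \<open>D \<ge> 2m - 4\<close>. Together with \<open>m \<le> n - 1\<close> this gives
  \<open>\<Sum>\<^sub>v k\<^sub>v\<^sup>2 \<le> (n - 1)(n - 2) + 4\<close>, i.e. \<open>E\<^sub>0[C] \<ge> (n - 3) / 3 > a\<close>.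
\<close>

lemma simple_graph_edgeE:
  assumes "simple_graph V E" "e \<in> E"
  obtains u v where "u \<in> V" "v \<in> V" "u \<noteq> v" "e = {u, v}"
  using assms unfolding simple_graph_def by blast

lemma simple_graph_edgeD:
  assumes "simple_graph V E" "{a, b} \<in> E"
  shows "a \<in> V" "b \<in> V" "a \<noteq> b"
  using assms unfolding simple_graph_def by (metis doubleton_eq_iff)+

lemma simple_graph_edge_through:
  assumes "simple_graph V E" "e \<in> E" "x \<in> e"
  obtains z where "z \<in> V" "z \<noteq> x" "e = {x, z}"
  using simple_graph_edgeE[OF assms(1,2)] assms(3) by (metis empty_iff insertE insert_commute)

lemma simple_graph_finite_edges: "simple_graph V E \<Longrightarrow> finite E"
  unfolding simple_graph_def by (rule finite_subset[of E "Pow V"]) auto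

lemma simple_graph_card_edge: "simple_graph V E \<Longrightarrow> e \<in> E \<Longrightarrow> card e = 2"
  by (erule simple_graph_edgeE) auto

lemma not_is_walk_Nil [simp]: "\<not> is_walk V E []"
  unfolding is_walk_def by simp

lemma is_walk_Cons_Cons_iff:
  "is_walk V E (a # b # r) \<longleftrightarrow> a \<in> V \<and> {a, b} \<in> E \<and> is_walk V E (b # r)"
  unfolding is_walk_def by (auto simp: less_Suc_eq_0_disj)

lemma is_walk_singleton_iff: "is_walk V E [x] \<longleftrightarrow> x \<in> V"
  unfolding is_walk_def by simp

lemma is_walk_Cons: "is_walk V E xs \<Longrightarrow> z \<in> V \<Longrightarrow> {z, hd xs} \<in> E \<Longrightarrow> is_walk V E (z # xs)"
  by (cases xs) (auto simp: is_walk_Cons_Cons_iff)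

lemma is_walk_appendD2: "is_walk V E (xs @ ys) \<Longrightarrow> ys \<noteq> [] \<Longrightarrow> is_walk V E ys"
proof (induction xs)
  case (Cons x xs)
  then obtain b r where "xs @ ys = b # r" by (cases "xs @ ys") auto
  with Cons show ?case by (simp add: is_walk_Cons_Cons_iff)
qed simp

lemma is_walk_take: "is_walk V E xs \<Longrightarrow> 0 < k \<Longrightarrow> is_walk V E (take k xs)"
  unfolding is_walk_def using set_take_subset[of k xs] by auto

lemma is_walk_appendD1: "is_walk V E (xs @ ys) \<Longrightarrow> xs \<noteq> [] \<Longrightarrow> is_walk V E xs"
  using is_walk_take[of V E "xs @ ys" "length xs"] by simp

lemma is_walk_imp_distinct_walk:
  "is_walk V E xs \<Longrightarrow> \<exists>ys. is_walk V E ys \<and> distinct ys \<and> hd ys = hd xs \<and> last ys = last xs"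
proof (induction xs)
  case (Cons x xs)
  show ?case
  proof (cases "xs = []")
    case True
    with Cons.prems show ?thesis by auto
  next
    case False
    then obtain b r where xs: "xs = b # r" by (cases xs) auto
    with Cons.prems have x: "x \<in> V" "{x, b} \<in> E" and walk: "is_walk V E xs"
      by (simp_all add: is_walk_Cons_Cons_iff)
    obtain ys where ys: "is_walk V E ys" "distinct ys" "hd ys = hd xs" "last ys = last xs"
      using Cons.IH[OF walk] by blast
    show ?thesis
    proof (cases "x \<in> set ys")
      case True
      then obtain p q where "ys = p @ x # q" by (meson split_list)
      with ys have "is_walk V E (x # q)" "distinct (x # q)" "last (x # q) = last xs"
        using is_walk_appendD2[of V E p "x # q"] by auto
      then show ?thesis using xs by (intro exI[of _ "x # q"]) simp
    next
      case False
      with ys x xs have "is_walk V E (x # ys)" "distinct (x # ys)"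
        by (simp_all add: is_walk_Cons)
      moreover have "last (x # ys) = last (x # xs)" using ys xs by (cases ys) auto
      ultimately show ?thesis by (intro exI[of _ "x # ys"]) simp
    qed
  qed
qed simp

lemma acyclic_graph_mono:
  "acyclic_graph V E \<Longrightarrow> V' \<subseteq> V \<Longrightarrow> E' \<subseteq> E \<Longrightarrow> acyclic_graph V' E'"
  unfolding acyclic_graph_def is_cycle_def is_walk_def by blast

lemma acyclic_graph_no_triangle:
  assumes "simple_graph V E" "acyclic_graph V E" "{a, b} \<in> E" "{b, c} \<in> E" "{c, a} \<in> E" "a \<noteq> c"
  shows False
proof -
  have "is_cycle V E [a, b, c]"
    using assms simple_graph_edgeD[OF assms(1)]
    by (auto simp: is_cycle_def is_walk_Cons_Cons_iff is_walk_singleton_iff)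
  with assms(2) show False unfolding acyclic_graph_def by blast
qed

lemma acyclic_graph_no_square:
  assumes "simple_graph V E" "acyclic_graph V E" "distinct [a, b, c, d]"
    "{a, b} \<in> E" "{b, c} \<in> E" "{c, d} \<in> E" "{d, a} \<in> E"
  shows False
proof -
  have "is_cycle V E [a, b, c, d]"
    using assms simple_graph_edgeD[OF assms(1)]
    by (auto simp: is_cycle_def is_walk_Cons_Cons_iff is_walk_singleton_iff)
  with assms(2) show False unfolding acyclic_graph_def by blast
qed

lemma simple_graph_finite_distinct_walks:
  assumes "simple_graph V E"
  shows "finite {xs. is_walk V E xs \<and> distinct xs}"
proof -
  have finV: "finite V" using assms unfolding simple_graph_def by blast
  have "{xs. is_walk V E xs \<and> distinct xs} \<subseteq> {xs. set xs \<subseteq> V \<and> length xs \<le> card V}"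
  proof
    fix xs assume "xs \<in> {xs. is_walk V E xs \<and> distinct xs}"
    then have "set xs \<subseteq> V" "distinct xs" by (simp_all add: is_walk_def)
    moreover from this have "length xs \<le> card V"
      using distinct_card card_mono[OF finV] by metis
    ultimately show "xs \<in> {xs. set xs \<subseteq> V \<and> length xs \<le> card V}" by simp
  qed
  then show ?thesis using finite_lists_length_le[OF finV] finite_subset by blast
qed

lemma simple_graph_longest_path:
  assumes sg: "simple_graph V E" and "E \<noteq> {}"
  obtains xs where "is_walk V E xs" "distinct xs" "2 \<le> length xs"
    "\<And>ys. is_walk V E ys \<Longrightarrow> distinct ys \<Longrightarrow> length ys \<le> length xs"
proof -
  let ?W = "{xs. is_walk V E xs \<and> distinct xs}"
  obtain u v where "{u, v} \<in> E" using \<open>E \<noteq> {}\<close> simple_graph_edgeE[OF sg] by (metis ex_in_conv)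
  then have uv: "[u, v] \<in> ?W"
    using simple_graph_edgeD[OF sg] by (simp add: is_walk_Cons_Cons_iff is_walk_singleton_iff)
  have fin: "finite (length ` ?W)" using simple_graph_finite_distinct_walks[OF sg] by blast
  have "Max (length ` ?W) \<in> length ` ?W" using uv fin by (intro Max_in) auto
  then obtain xs where xs: "xs \<in> ?W" "length xs = Max (length ` ?W)" by auto
  have "length ys \<le> length xs" if "ys \<in> ?W" for ys using xs(2) fin that by simp
  moreover from this have "2 \<le> length xs" using uv by fastforce
  ultimately show ?thesis using that xs(1) by blast
qed

lemma acyclic_graph_has_leaf:
  assumes sg: "simple_graph V E" and ac: "acyclic_graph V E" and "E \<noteq> {}"
  obtains x y where "{x, y} \<in> E" "\<And>e. e \<in> E \<Longrightarrow> x \<in> e \<Longrightarrow> e = {x, y}"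
proof -
  obtain xs where walk: "is_walk V E xs" and dist: "distinct xs" and "2 \<le> length xs"
    and longest: "\<And>ys. is_walk V E ys \<Longrightarrow> distinct ys \<Longrightarrow> length ys \<le> length xs"
    using simple_graph_longest_path[OF sg \<open>E \<noteq> {}\<close>] by blast
  then obtain x y r where xs: "xs = x # y # r"
    by (metis Suc_le_length_iff numeral_2_eq_2)
  have "{x, y} \<in> E" using walk xs by (simp add: is_walk_Cons_Cons_iff)
  moreover have "e = {x, y}" if e: "e \<in> E" "x \<in> e" for e
  proof -
    \<comment> \<open>A longest path cannot be extended at \<open>x\<close>,
      and a neighbour of \<open>x\<close> further along it would close a cycle.\<close>
    obtain z where z: "z \<in> V" "z \<noteq> x" "e = {x, z}" using simple_graph_edge_through[OF sg e] .
    consider "z = y" | "z \<notin> set xs" | "z \<in> set r" using xs z by auto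
    then show ?thesis
    proof cases
      case 1
      then show ?thesis using z by simp
    next
      case 2
      have "{z, hd xs} \<in> E" using e z xs by (simp add: insert_commute)
      then have "is_walk V E (z # xs)" using is_walk_Cons[OF walk z(1)] by blast
      moreover have "distinct (z # xs)" using dist 2 by simp
      ultimately show ?thesis using longest by fastforce
    next
      case 3
      then obtain p q where r: "r = p @ z # q" by (meson split_list)
      let ?c = "x # y # p @ [z]"
      have "is_walk V E ?c" using walk xs r is_walk_appendD1[of V E ?c q] by simp
      moreover have "distinct ?c" using dist xs r by auto
      moreover have "{last ?c, hd ?c} \<in> E" using e z by (simp add: insert_commute)
      ultimately have "is_cycle V E ?c" unfolding is_cycle_def by simp
      then show ?thesis using ac unfolding acyclic_graph_def by blast
    qed
  qed
  ultimately show ?thesis using that by blast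
qed

lemma acyclic_graph_card_edges_less:
  "simple_graph V E \<Longrightarrow> acyclic_graph V E \<Longrightarrow> V \<noteq> {} \<Longrightarrow> card E < card V"
proof (induction "card V" arbitrary: V E rule: less_induct)
  case less
  then have finV: "finite V" by (simp add: simple_graph_def)
  show ?case
  proof (cases "E = {}")
    case True
    then show ?thesis using finV less.prems by (simp add: card_gt_0_iff)
  next
    case False
    obtain x y where xy: "{x, y} \<in> E" and leaf: "\<And>e. e \<in> E \<Longrightarrow> x \<in> e \<Longrightarrow> e = {x, y}"
      using acyclic_graph_has_leaf[OF less.prems(1,2) False] by blast
    have x: "x \<in> V" "y \<in> V" "x \<noteq> y" using simple_graph_edgeD[OF less.prems(1) xy] by auto
    let ?V = "V - {x}" and ?E = "E - {{x, y}}"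
    have "simple_graph ?V ?E"
      unfolding simple_graph_def
    proof (intro conjI ballI)
      show "finite ?V" using finV by simp
      fix e assume e: "e \<in> ?E"
      then have "x \<notin> e" using leaf by blast
      moreover obtain u v where "u \<in> V" "v \<in> V" "u \<noteq> v" "e = {u, v}"
        using simple_graph_edgeE[OF less.prems(1)] e by blast
      ultimately show "\<exists>u v. u \<in> ?V \<and> v \<in> ?V \<and> u \<noteq> v \<and> e = {u, v}" by blast
    qed
    moreover have "acyclic_graph ?V ?E" by (rule acyclic_graph_mono[OF less.prems(2)]) auto
    moreover have "?V \<noteq> {}" using x by blast
    moreover have "card ?V < card V" using card_Diff1_less[OF finV x(1)] .
    ultimately have "card ?E < card ?V" using less.hyps by blast
    then show ?thesis
      using xy x finV simple_graph_finite_edges[OF less.prems(1)] by (simp add: card_Diff_singleton)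
  qed
qed

lemma degree_eq_card_minus_one_if_adjacent_to_all:
  assumes sg: "simple_graph V E" and x: "x \<in> V" and adj: "\<forall>y\<in>V - {x}. {x, y} \<in> E"
  shows "degree E x = card V - 1"
proof -
  have "{e \<in> E. x \<in> e} = (\<lambda>y. {x, y}) ` (V - {x})"
  proof
    show "{e \<in> E. x \<in> e} \<subseteq> (\<lambda>y. {x, y}) ` (V - {x})"
    proof
      fix e assume "e \<in> {e \<in> E. x \<in> e}"
      then obtain z where "z \<in> V" "z \<noteq> x" "e = {x, z}"
        using simple_graph_edge_through[OF sg] by blast
      then show "e \<in> (\<lambda>y. {x, y}) ` (V - {x})" by blast
    qed
    show "(\<lambda>y. {x, y}) ` (V - {x}) \<subseteq> {e \<in> E. x \<in> e}" using adj by auto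
  qed
  moreover have "inj_on (\<lambda>y. {x, y}) (V - {x})" by (rule inj_onI) (auto simp: doubleton_eq_iff)
  ultimately have "degree E x = card (V - {x})" unfolding degree_def by (simp add: card_image)
  also have "\<dots> = card V - 1" using x by simp
  finally show ?thesis .
qed

lemma connected_path_to_non_neighbour:
  assumes "graph_connected V E" "u \<in> V" "v \<in> V" "u \<noteq> v" "{u, v} \<notin> E"
  obtains w p r where "is_walk V E (u # w # p # r)" "distinct (u # w # p # r)"
    "last (u # w # p # r) = v"
proof -
  obtain xs where "is_walk V E xs" "hd xs = u" "last xs = v"
    using assms(1-3) unfolding graph_connected_def by blast
  then obtain ws where ws: "is_walk V E ws" "distinct ws" "hd ws = u" "last ws = v"
    using is_walk_imp_distinct_walk by metis
  then obtain t where t: "ws = u # t" by (cases ws) auto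
  with ws assms(4) obtain w t' where wt': "t = w # t'" by (cases t) auto
  have "t' \<noteq> []"
  proof
    assume "t' = []"
    then have "ws = [u, v]" using t wt' ws(4) by simp
    then show False using ws(1) assms(5) by (simp add: is_walk_Cons_Cons_iff)
  qed
  then obtain p r where "ws = u # w # p # r" using t wt' by (cases t') auto
  with ws that show ?thesis by metis
qed

lemma non_star_tree_has_path3:
  assumes tr: "is_tree V E" and no_star: "\<forall>v\<in>V. degree E v \<noteq> card V - 1"
  obtains a b c d where "distinct [a, b, c, d]" "{a, b} \<in> E" "{b, c} \<in> E" "{c, d} \<in> E"
proof -
  have sg: "simple_graph V E" and ac: "acyclic_graph V E" and cn: "graph_connected V E"
    and "V \<noteq> {}"
    using tr unfolding is_tree_def by auto
  have non_neighbour: "\<exists>y\<in>V. y \<noteq> x \<and> {x, y} \<notin> E" if "x \<in> V" for x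
    using degree_eq_card_minus_one_if_adjacent_to_all[OF sg that] no_star that by blast
  obtain x where x: "x \<in> V" using \<open>V \<noteq> {}\<close> by blast
  then obtain y where y: "y \<in> V" "x \<noteq> y" "{x, y} \<notin> E" using non_neighbour by blast
  obtain w p r where xp: "is_walk V E (x # w # p # r)" "distinct (x # w # p # r)"
    "last (x # w # p # r) = y"
    by (rule connected_path_to_non_neighbour[OF cn x y])
  have xw: "{x, w} \<in> E" and wp: "{w, p} \<in> E" using xp(1) by (simp_all add: is_walk_Cons_Cons_iff)
  show ?thesis
  proof (cases r)
    case (Cons q r')
    then have "{p, q} \<in> E" using xp(1) by (simp add: is_walk_Cons_Cons_iff)
    moreover have "distinct [x, w, p, q]" using xp(2) Cons by auto
    ultimately show ?thesis using that xw wp by blast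
  next
    case Nil
    \<comment> \<open>The path is \<open>x - w - y\<close>; start again from \<open>w\<close> towards a non-neighbour of \<open>w\<close>.\<close>
    then have py: "p = y" using xp(3) by simp
    have "w \<in> V" using simple_graph_edgeD[OF sg xw] by blast
    then obtain z where z: "z \<in> V" "w \<noteq> z" "{w, z} \<notin> E" using non_neighbour by blast
    obtain p' q r' where wz: "is_walk V E (w # p' # q # r')" "distinct (w # p' # q # r')"
      by (rule connected_path_to_non_neighbour[OF cn \<open>w \<in> V\<close> z])
    have wp': "{w, p'} \<in> E" and p'q: "{p', q} \<in> E"
      using wz(1) by (simp_all add: is_walk_Cons_Cons_iff)
    show ?thesis
    proof (cases "p' = x")
      case True
      have "q \<noteq> y" using p'q y(3) True by auto
      then have "distinct [y, w, x, q]" using wz(2) xp(2) py True Nil by auto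
      moreover have "{y, w} \<in> E" "{w, x} \<in> E" using wp py xw by (simp_all add: insert_commute)
      moreover have "{x, q} \<in> E" using p'q True by simp
      ultimately show ?thesis by (rule that)
    next
      case False
      have "{p', x} \<notin> E" using acyclic_graph_no_triangle[OF sg ac xw wp'] False by blast
      then have "q \<noteq> x" using p'q by blast
      then have "distinct [x, w, p', q]" using wz(2) xp(2) False by auto
      then show ?thesis using xw wp' p'q by (rule that)
    qed
  qed
qed

lemma degree_eq_sum_of_bool: "finite E \<Longrightarrow> degree E v = (\<Sum>e\<in>E. of_bool (v \<in> e))"
  by (simp add: degree_def Int_def)

lemma sum_degree_squares_eq_sum_card_Int:
  assumes sg: "simple_graph V E"
  shows "(\<Sum>v\<in>V. degree E v ^ 2) = (\<Sum>e\<in>E. \<Sum>f\<in>E. card (e \<inter> f))"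
proof -
  have finV: "finite V" using sg by (simp add: simple_graph_def)
  have finE: "finite E" using simple_graph_finite_edges[OF sg] .
  have "(\<Sum>v\<in>V. degree E v ^ 2) = (\<Sum>v\<in>V. \<Sum>e\<in>E. \<Sum>f\<in>E. of_bool (v \<in> e \<inter> f))"
    by (simp add: degree_eq_sum_of_bool[OF finE] power2_eq_square sum_product of_bool_conj)
  also have "\<dots> = (\<Sum>e\<in>E. \<Sum>f\<in>E. \<Sum>v\<in>V. of_bool (v \<in> e \<inter> f))"
    by (subst sum.swap) (simp add: sum.swap[of _ V])
  also have "\<dots> = (\<Sum>e\<in>E. \<Sum>f\<in>E. card (e \<inter> f))"
  proof (intro sum.cong refl)
    fix e f assume "e \<in> E"
    then have "V \<inter> {v. v \<in> e \<inter> f} = e \<inter> f"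
      using simple_graph_edgeE[OF sg] by blast
    then show "(\<Sum>v\<in>V. of_bool (v \<in> e \<inter> f)) = card (e \<inter> f)" using finV by simp
  qed
  finally show ?thesis .
qed

lemma card_Int_edges:
  assumes sg: "simple_graph V E" and "e \<in> E" "f \<in> E"
  shows "card (e \<inter> f) + of_bool (e \<inter> f = {}) = 1 + of_bool (e = f)"
proof -
  have ce: "card e = 2" and cf: "card f = 2" using simple_graph_card_edge[OF sg] assms by auto
  then have fin: "finite e" "finite f" by (simp_all add: card_ge_0_finite)
  consider "e = f" | "e \<inter> f = {}" | "e \<noteq> f" "e \<inter> f \<noteq> {}" by blast
  then show ?thesis
  proof cases
    case 3
    have "card (e \<inter> f) \<le> 1"
    proof (rule ccontr)
      assume "\<not> card (e \<inter> f) \<le> 1"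
      then have "e \<inter> f = e" using card_seteq[OF fin(1), of "e \<inter> f"] ce by simp
      then have "e = f" using card_seteq[OF fin(2), of e] ce cf by auto
      with 3 show False by simp
    qed
    moreover have "card (e \<inter> f) \<noteq> 0" using 3 fin by simp
    ultimately show ?thesis using 3 by simp
  qed (use ce in auto)
qed

definition disjoint_edge_pairs :: "'a set set \<Rightarrow> ('a set \<times> 'a set) set" where
  "disjoint_edge_pairs E = {(e, f) \<in> E \<times> E. e \<inter> f = {}}"

lemma card_disjoint_edge_pairs_eq_sum:
  "finite E \<Longrightarrow> card (disjoint_edge_pairs E) = (\<Sum>e\<in>E. \<Sum>f\<in>E. of_bool (e \<inter> f = {}))"
proof -
  assume finE: "finite E"
  have "disjoint_edge_pairs E = (E \<times> E) \<inter> {p. fst p \<inter> snd p = {}}"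
    unfolding disjoint_edge_pairs_def by auto
  then have "card (disjoint_edge_pairs E) = (\<Sum>p\<in>E \<times> E. of_bool (fst p \<inter> snd p = {}))"
    using finE by simp
  then show ?thesis by (simp add: sum.cartesian_product split_beta')
qed

lemma sum_degree_squares_add_card_disjoint_edge_pairs:
  assumes sg: "simple_graph V E"
  shows "(\<Sum>v\<in>V. degree E v ^ 2) + card (disjoint_edge_pairs E) = card E * card E + card E"
proof -
  have finE: "finite E" using simple_graph_finite_edges[OF sg] .
  have "(\<Sum>v\<in>V. degree E v ^ 2) + card (disjoint_edge_pairs E)
      = (\<Sum>e\<in>E. \<Sum>f\<in>E. card (e \<inter> f) + of_bool (e \<inter> f = {}))"
    by (simp add: sum_degree_squares_eq_sum_card_Int[OF sg]
        card_disjoint_edge_pairs_eq_sum[OF finE] sum.distrib)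
  also have "\<dots> = (\<Sum>e\<in>E. \<Sum>f\<in>E. 1 + of_bool (e = f))"
    by (intro sum.cong refl) (rule card_Int_edges[OF sg])
  also have "\<dots> = (\<Sum>e\<in>E. card E + 1)"
  proof (intro sum.cong refl)
    fix e assume "e \<in> E"
    then have "E \<inter> {f. e = f} = {e}" by auto
    then show "(\<Sum>f\<in>E. 1 + of_bool (e = f)) = card E + 1"
      using finE by (simp only: sum.distrib sum_of_bool_eq) simp
  qed
  also have "\<dots> = card E * card E + card E" by simp
  finally show ?thesis .
qed

lemma acyclic_graph_edge_meeting_path_ends:
  assumes sg: "simple_graph V E" and ac: "acyclic_graph V E" and dist: "distinct [a, b, c, d]"
    and ab: "{a, b} \<in> E" and bc: "{b, c} \<in> E" and cd: "{c, d} \<in> E"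
    and f: "f \<in> E" "f \<inter> {a, b} \<noteq> {}" "f \<inter> {c, d} \<noteq> {}"
  shows "f = {b, c}"
proof -
  obtain g h where g: "g \<in> {a, b}" "g \<in> f" and h: "h \<in> {c, d}" "h \<in> f" using f by blast
  obtain z where "z \<noteq> g" "f = {g, z}" using simple_graph_edge_through[OF sg f(1) g(2)] .
  moreover have "g \<noteq> h" using g h dist by auto
  ultimately have fgh: "{g, h} \<in> E" "f = {g, h}" using h f(1) by auto
  consider "g = a" "h = c" | "g = a" "h = d" | "g = b" "h = c" | "g = b" "h = d" using g h by blast
  then show ?thesis
  proof cases
    case 1
    then show ?thesis
      using acyclic_graph_no_triangle[OF sg ac ab bc] fgh dist by (auto simp: insert_commute)
  next
    case 2
    then show ?thesis
      using acyclic_graph_no_square[OF sg ac dist ab bc cd] fgh by (auto simp: insert_commute)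
  next
    case 4
    then show ?thesis
      using acyclic_graph_no_triangle[OF sg ac bc cd] fgh dist by (auto simp: insert_commute)
  qed (use fgh in simp)
qed

lemma card_disjoint_edge_pairs_ge:
  assumes sg: "simple_graph V E" and ac: "acyclic_graph V E" and dist: "distinct [a, b, c, d]"
    and ab: "{a, b} \<in> E" and bc: "{b, c} \<in> E" and cd: "{c, d} \<in> E"
  shows "2 * card E \<le> card (disjoint_edge_pairs E) + 4"
proof -
  have finE: "finite E" using simple_graph_finite_edges[OF sg] .
  define A where "A e = {f \<in> E. e \<inter> f = {}}" for e
  define P where "P e = {e} \<times> A e \<union> A e \<times> {e}" for e
  have finA: "finite (A e)" for e unfolding A_def using finE by simp
  have "E - {{b, c}} \<subseteq> A {a, b} \<union> A {c, d}"
    unfolding A_def using acyclic_graph_edge_meeting_path_ends[OF sg ac dist ab bc cd] by blast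
  then have "card E - 1 \<le> card (A {a, b} \<union> A {c, d})"
    using bc finE finA by (metis card_Diff_singleton card_mono finite_UnI)
  also have "\<dots> \<le> card (A {a, b}) + card (A {c, d})" by (rule card_Un_le)
  finally have A_ge: "card E - 1 \<le> card (A {a, b}) + card (A {c, d})" .
  have card_P: "card (P e) = 2 * card (A e)" if "e \<noteq> {}" for e
  proof -
    have "e \<notin> A e" using that unfolding A_def by blast
    then have "{e} \<times> A e \<inter> A e \<times> {e} = {}" by blast
    then show ?thesis unfolding P_def using finA by (simp add: card_Un_disjoint card_cartesian_product)
  qed
  have finP: "finite (P e)" for e unfolding P_def using finA by simp
  have "finite (disjoint_edge_pairs E)"
    by (rule finite_subset[of _ "E \<times> E"]) (auto simp: disjoint_edge_pairs_def finE)
  moreover have "P {a, b} \<union> P {c, d} \<subseteq> disjoint_edge_pairs E"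
    unfolding P_def A_def disjoint_edge_pairs_def using ab cd by auto
  ultimately have "card (P {a, b} \<union> P {c, d}) \<le> card (disjoint_edge_pairs E)"
    by (rule card_mono)
  moreover have "card (P {a, b} \<inter> P {c, d}) \<le> 2"
  proof -
    have "{a, b} \<noteq> {c, d}" using dist by (simp add: doubleton_eq_iff)
    then have "P {a, b} \<inter> P {c, d} \<subseteq> {({a, b}, {c, d}), ({c, d}, {a, b})}"
      unfolding P_def by blast
    then have "card (P {a, b} \<inter> P {c, d}) \<le> card {({a, b}, {c, d}), ({c, d}, {a, b})}"
      by (rule card_mono[rotated]) simp
    also have "\<dots> \<le> 2" by (rule card_insert_le_m1) simp_all
    finally show ?thesis .
  qed
  moreover have "card (P {a, b} \<union> P {c, d}) + card (P {a, b} \<inter> P {c, d})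
      = 2 * card (A {a, b}) + 2 * card (A {c, d})"
    using card_Un_Int[OF finP[of "{a, b}"] finP[of "{c, d}"]] card_P[of "{a, b}"] card_P[of "{c, d}"]
    by simp
  moreover have "card E \<ge> 1" using bc finE by (metis One_nat_def Suc_leI card_gt_0_iff empty_iff)
  ultimately show ?thesis using A_ge by linarith
qed

lemma non_star_tree_sum_degree_squares_le:
  assumes tr: "is_tree V E" and no_star: "\<forall>v\<in>V. degree E v \<noteq> card V - 1"
  shows "(\<Sum>v\<in>V. degree E v ^ 2) + 2 * card V \<le> card V * (card V - 1) + 6"
proof -
  have sg: "simple_graph V E" and ac: "acyclic_graph V E" and "V \<noteq> {}"
    using tr unfolding is_tree_def by auto
  obtain a b c d where "distinct [a, b, c, d]" "{a, b} \<in> E" "{b, c} \<in> E" "{c, d} \<in> E"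
    using non_star_tree_has_path3[OF tr no_star] .
  then have "2 * card E \<le> card (disjoint_edge_pairs E) + 4"
    using card_disjoint_edge_pairs_ge[OF sg ac] by blast
  then have S: "(\<Sum>v\<in>V. degree E v ^ 2) + card E \<le> card E * card E + 4"
    using sum_degree_squares_add_card_disjoint_edge_pairs[OF sg] by linarith
  obtain k where n: "card V = card E + 1 + k"
    using acyclic_graph_card_edges_less[OF sg ac \<open>V \<noteq> {}\<close>] less_imp_Suc_add by fastforce
  have "k \<le> k * k" by (simp add: le_square)
  with S have "(\<Sum>v\<in>V. degree E v ^ 2) + card E + k \<le> card E * card E + 2 * card E * k + k * k + 4"
    by linarith
  then show ?thesis unfolding n by (simp add: algebra_simps)
qed

lemma E0C_eq:
  assumes "finite V" "V \<noteq> {}"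
  shows "E0C V E = (real (card V) * (real (card V) - 1) - (\<Sum>v\<in>V. real (degree E v) ^ 2)) / 6"
  using assms by (simp add: E0C_def second_moment_degree_def field_simps)

theorem mainTheorem2:
  fixes a :: real and V :: "'a set" and E :: "'a set set"
  assumes "a \<ge> 0"
    and "is_tree V E"
    and "real (card V) > 3 * a + 3"
    and "E0C V E \<le> a"
  shows "\<exists>v\<in>V. degree E v = card V - 1"
proof (rule ccontr)
  assume "\<not> ?thesis"
  then have no_star: "\<forall>v\<in>V. degree E v \<noteq> card V - 1" by blast
  have "finite V" "V \<noteq> {}" using assms(2) by (auto simp: is_tree_def simple_graph_def)
  have "(\<Sum>v\<in>V. degree E v ^ 2) + 2 * card V \<le> card V * (card V - 1) + 6"
    using non_star_tree_sum_degree_squares_le[OF assms(2) no_star] .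
  then have "real ((\<Sum>v\<in>V. degree E v ^ 2) + 2 * card V) \<le> real (card V * (card V - 1) + 6)"
    by (rule of_nat_mono)
  then have "(\<Sum>v\<in>V. real (degree E v) ^ 2) + 2 * real (card V)
      \<le> real (card V) * (real (card V) - 1) + 6"
    using \<open>V \<noteq> {}\<close> \<open>finite V\<close> by (simp add: of_nat_diff card_gt_0_iff Suc_le_eq)
  then have "3 * E0C V E \<ge> real (card V) - 3"
    unfolding E0C_eq[OF \<open>finite V\<close> \<open>V \<noteq> {}\<close>] by simp
  with assms(3,4) show False by linarith
qed

end
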